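(* Let $\mathcal{S}=\{c\in\mathbb{M}_2: 0\le c\le 1,\ \operatorname{trace}(c)=1,\ 0<\det(c)<\tfrac14\}$, and let $a,b\in\mathcal{S}$. Then $a$ is absolutely compatible with $b$ if, and only if, there exists a unitary $u\in\mathbb{M}_2$ such that $$u^*au=\begin{pmatrix} t&\alpha\\ \bar\alpha & 1-t\end{pmatrix},\qquad u^*bu=\begin{pmatrix} s&\beta\\ \bar\beta&1-s\end{pmatrix},$$ where $\beta=-\alpha\ne0$, $s,t\in(0,1)$, $|\alpha|^2<t(1-t)$, and either $s=\frac{|\alpha|^2}{t}$ or $s=1-\frac{|\alpha|^2}{1-t}$.
   Context: $\mathbb{M}_2$ is the algebra of $2\times2$ complex matrices; $\operatorname{trace}$ is the non-normalized trace. For $x\in\mathbb{M}_2$, $|x|=(x^*x)^{1/2}$. Elements $0\le a,b\le 1$ are absolutely compatible if $|a-b|+|1-a-b|=1$. Equivalently, $\mathcal{S}=\left\{\begin{pmatrix} t&\alpha\\ \bar\alpha&1-t\end{pmatrix}: t\in(0,1),\ \alpha\in\mathbb{C},\ |\alpha|^2<t(1-t)\right\}\setminus\{\tfrac12 1\}$. *)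

theory Defs
  imports "HOL-Analysis.Analysis"
begin

type_synonym M2 = "complex^2^2"

definition adj :: "M2 \<Rightarrow> M2" where
  "adj A = (\<chi> i j. cnj (A $ j $ i))"

definition qform :: "M2 \<Rightarrow> complex^2 \<Rightarrow> complex" where
  "qform A v = (\<Sum>i\<in>UNIV. cnj (v $ i) * (A *v v) $ i)"

definition psd :: "M2 \<Rightarrow> bool" where
  "psd A \<longleftrightarrow> adj A = A \<and> (\<forall>v. 0 \<le> Re (qform A v))"

definition mtrace :: "M2 \<Rightarrow> complex" where
  "mtrace A = A $ 1 $ 1 + A $ 2 $ 2"

definition mabs :: "M2 \<Rightarrow> M2" where
  "mabs x = (THE p. psd p \<and> p ** p = adj x ** x)"

definition unitary :: "M2 \<Rightarrow> bool" where
  "unitary u \<longleftrightarrow> adj u ** u = mat 1"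

definition abs_compatible :: "M2 \<Rightarrow> M2 \<Rightarrow> bool" where
  "abs_compatible a b \<longleftrightarrow> mabs (a - b) + mabs (mat 1 - a - b) = mat 1"

definition mat2 :: "complex \<Rightarrow> complex \<Rightarrow> complex \<Rightarrow> complex \<Rightarrow> M2" where
  "mat2 p q r s = (\<chi> i j. if i = 1 then (if j = 1 then p else q) else (if j = 1 then r else s))"

text \<open>The set S. det c of a positive matrix is real; we require it explicitly.\<close>
definition setS :: "M2 set" where
  "setS = {c. psd c \<and> psd (mat 1 - c) \<and> mtrace c = 1 \<and> Im (det c) = 0
             \<and> 0 < Re (det c) \<and> Re (det c) < 1/4}"

end

theory Submission
  imports Defs
begin

text \<open>For a Hermitian 2x2 matrix x of trace zero, x^2 = -det x \<cdot> 1, so \<bar>x\<bar> is the scalar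
  sqrt(-det x). For Hermitian a, b of trace one both a - b and 1 - a - b are of this kind, so absolute
  compatibility becomes the scalar equation sqrt(-det(a - b)) + sqrt(-det(1 - a - b)) = 1, which is
  invariant under unitary conjugation. After conjugating by a unitary that diagonalises 1 - a - b,
  the off-diagonal entries of a and b are \<alpha> and -\<alpha>, and the equation reads
  sqrt((t - s)^2 + 4\<bar>\<alpha>\<bar>^2) + \<bar>1 - t - s\<bar> = 1. Its solutions are \<bar>\<alpha>\<bar>^2 = t s when t + s \<le> 1 and
  \<bar>\<alpha>\<bar>^2 = (1 - t)(1 - s) when t + s \<ge> 1.\<close>

lemma mat2_cases: obtains p q r s where "(x::M2) = mat2 p q r s"
proof
  show "x = mat2 (x$1$1) (x$1$2) (x$2$1) (x$2$2)"
    by (simp add: mat2_def vec_eq_iff forall_2)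
qed

lemma mat2_nth [simp]:
  "mat2 p q r s $ 1 $ 1 = p" "mat2 p q r s $ 1 $ 2 = q"
  "mat2 p q r s $ 2 $ 1 = r" "mat2 p q r s $ 2 $ 2 = s"
  unfolding mat2_def by simp_all

lemma mat2_eq_iff: "mat2 p q r s = mat2 p' q' r' s' \<longleftrightarrow> p = p' \<and> q = q' \<and> r = r' \<and> s = s'"
  by (metis mat2_nth)

lemma mat2_mult: "mat2 a b c d ** mat2 e f g h = mat2 (a*e + b*g) (a*f + b*h) (c*e + d*g) (c*f + d*h)"
  by (simp add: matrix_matrix_mult_def mat2_def vec_eq_iff forall_2 sum_2)

lemma mat2_diff: "mat2 a b c d - mat2 e f g h = mat2 (a - e) (b - f) (c - g) (d - h)"
  by (simp add: mat2_def vec_eq_iff forall_2)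

lemma mat2_add: "mat2 a b c d + mat2 e f g h = mat2 (a + e) (b + f) (c + g) (d + h)"
  by (simp add: mat2_def vec_eq_iff forall_2)

lemma mat_eq_mat2: "mat k = mat2 k 0 0 k"
  by (simp add: mat2_def mat_def vec_eq_iff forall_2)

lemma adj_mat2: "adj (mat2 a b c d) = mat2 (cnj a) (cnj c) (cnj b) (cnj d)"
  by (simp add: adj_def mat2_def vec_eq_iff forall_2)

lemma det_mat2: "det (mat2 a b c d) = a*d - b*c"
  by (simp add: det_2)

lemma mtrace_mat2: "mtrace (mat2 a b c d) = a + d"
  by (simp add: mtrace_def)

lemma qform_mat2:
  "qform (mat2 a b c d) v = cnj (v$1) * (a * v$1 + b * v$2) + cnj (v$2) * (c * v$1 + d * v$2)"
  by (simp add: qform_def matrix_vector_mult_def mat2_def sum_2)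

lemma mult_cnj_eq_norm_square:
  "z * cnj z = (of_real (cmod z))\<^sup>2" "cnj z * z = (of_real (cmod z))\<^sup>2"
  by (simp_all add: complex_norm_square[symmetric] mult.commute)

lemma matrix_diff_ldistrib: "(A :: 'a::ring_1^'n^'m) ** (B - C) = A ** B - A ** C"
  by (simp add: matrix_matrix_mult_def vec_eq_iff sum_subtractf algebra_simps)

lemma matrix_diff_rdistrib: "((A :: 'a::ring_1^'n^'m) - B) ** C = A ** C - B ** C"
  by (simp add: matrix_matrix_mult_def vec_eq_iff sum_subtractf algebra_simps)

lemma adj_diff: "adj (x - y) = adj x - adj y"
  by (simp add: adj_def vec_eq_iff)

lemma adj_mat_1 [simp]: "adj (mat 1) = mat 1"
  by (simp add: mat_eq_mat2 adj_mat2)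

lemma adj_adj: "adj (adj x) = x"
  by (simp add: adj_def vec_eq_iff)

lemma adj_matrix_mult: "adj (x ** y) = adj y ** adj x"
  by (cases x rule: mat2_cases, cases y rule: mat2_cases) (simp add: adj_mat2 mat2_mult mult.commute)

lemma mtrace_diff: "mtrace (x - y) = mtrace x - mtrace y"
  by (simp add: mtrace_def)

lemma mtrace_mat_1 [simp]: "mtrace (mat 1) = 2"
  by (simp add: mat_eq_mat2 mtrace_mat2)

lemma mtrace_matrix_mult_commute: "mtrace (x ** y) = mtrace (y ** x)"
  by (cases x rule: mat2_cases, cases y rule: mat2_cases) (simp add: mat2_mult mtrace_mat2 algebra_simps)

lemma unitary_right_inverse: "unitary u \<Longrightarrow> u ** adj u = mat 1"
  unfolding unitary_def by (simp add: matrix_left_right_inverse)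

lemma adj_congruence: "adj (adj u ** x ** u) = adj u ** adj x ** u"
  by (simp add: adj_matrix_mult adj_adj matrix_mul_assoc)

lemma congruence_diff: "adj u ** (x - y) ** u = adj u ** x ** u - adj u ** y ** u"
  by (simp add: matrix_diff_ldistrib matrix_diff_rdistrib)

lemma unitary_conj_one_diff:
  "unitary u \<Longrightarrow> adj u ** (mat 1 - a - b) ** u = mat 1 - adj u ** a ** u - adj u ** b ** u"
  by (simp add: congruence_diff unitary_def)

lemma det_unitary_conj:
  assumes "unitary u" shows "det (adj u ** x ** u) = det x"
proof -
  have "det (adj u) * det u = 1"
    using assms unfolding unitary_def by (metis det_I det_mul)
  then show ?thesis by (simp add: det_mul algebra_simps)
qed

lemma mtrace_unitary_conj:
  assumes "unitary u" shows "mtrace (adj u ** x ** u) = mtrace x"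
proof -
  have "mtrace (adj u ** x ** u) = mtrace (x ** u ** adj u)"
    by (metis matrix_mul_assoc mtrace_matrix_mult_commute)
  also have "\<dots> = mtrace x"
    using unitary_right_inverse[OF assms] by (simp flip: matrix_mul_assoc)
  finally show ?thesis .
qed

lemma hermitian_mat2:
  assumes "adj x = x"
  obtains p r b where "x = mat2 (of_real p) b (cnj b) (of_real r)"
proof -
  obtain a b c d where x: "x = mat2 a b c d" by (rule mat2_cases)
  with assms have "cnj a = a" "c = cnj b" "cnj d = d"
    by (auto simp: adj_mat2 mat2_eq_iff)
  then have "x = mat2 (of_real (Re a)) b (cnj b) (of_real (Re d))"
    by (simp add: x mat2_eq_iff complex_eq_iff)
  then show ?thesis by (rule that)
qed

lemma hermitian_trace_one_mat2:
  assumes "adj x = x" "mtrace x = 1"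
  obtains t \<alpha> where "x = mat2 (of_real t) \<alpha> (cnj \<alpha>) (of_real (1 - t))"
proof -
  obtain p r b where x: "x = mat2 (of_real p) b (cnj b) (of_real r)"
    using assms(1) by (rule hermitian_mat2)
  with assms(2) have "r = 1 - p"
    by (simp add: mtrace_mat2 complex_eq_iff)
  with x show ?thesis by (intro that) simp
qed

lemma hermitian_traceless_mat2:
  assumes "adj x = x" "mtrace x = 0"
  obtains p q where "x = mat2 (of_real p) q (cnj q) (- of_real p)"
proof -
  obtain p r b where x: "x = mat2 (of_real p) b (cnj b) (of_real r)"
    using assms(1) by (rule hermitian_mat2)
  with assms(2) have "r = - p"
    by (simp add: mtrace_mat2 complex_eq_iff)
  with x show ?thesis by (intro that) simp
qed

lemma psd_mat_of_real: "0 \<le> m \<Longrightarrow> psd (mat (of_real m))"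
  unfolding psd_def mat_eq_mat2 adj_mat2 qform_mat2
  by (simp add: complex_norm_square[symmetric] algebra_simps)

lemma psd_sqrt_of_scalar:
  assumes p: "psd p" and pp: "p ** p = mat (of_real (m\<^sup>2))" and m: "0 \<le> m"
  shows "p = mat (of_real m)"
proof -
  have qf: "\<And>v. 0 \<le> Re (qform p v)" and "adj p = p"
    using p by (auto simp: psd_def)
  then obtain x y b where pe: "p = mat2 (of_real x) b (cnj b) (of_real y)"
    by (elim hermitian_mat2)
  have x: "0 \<le> x"
    using qf[of "\<chi> i. if i = 1 then 1 else 0"] by (simp add: pe qform_mat2)
  have y: "0 \<le> y"
    using qf[of "\<chi> i. if i = 1 then 0 else 1"] by (simp add: pe qform_mat2)
  have eqs: "of_real x * of_real x + b * cnj b = of_real (m\<^sup>2)" "b * (of_real (x + y)) = 0"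
    "cnj b * b + of_real y * of_real y = of_real (m\<^sup>2)"
    using pp by (simp_all add: pe mat2_mult mat_eq_mat2 mat2_eq_iff algebra_simps)
  have b: "b = 0"
  proof (rule ccontr)
    assume "b \<noteq> 0"
    with eqs(2) have "x + y = 0"
      by (metis mult_eq_0_iff of_real_eq_0_iff)
    with x y have "x = 0" "y = 0" by auto
    then have "Re (qform p (\<chi> i. if i = 1 then 1 else - cnj b)) = - 2 * (cmod b)\<^sup>2"
      by (simp add: pe qform_mat2 complex_norm_square[symmetric] algebra_simps)
    with qf[of "\<chi> i. if i = 1 then 1 else - cnj b"] \<open>b \<noteq> 0\<close> show False
      by simp
  qed
  have "x\<^sup>2 = m\<^sup>2" "y\<^sup>2 = m\<^sup>2"
    using eqs(1,3) b by (simp_all add: power2_eq_square flip: of_real_mult)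
  with x y m have "x = m" "y = m"
    by (simp_all add: power2_eq_iff_nonneg)
  then show ?thesis by (simp add: pe b mat_eq_mat2)
qed

lemma mabs_eq_scalar:
  assumes "adj x ** x = mat (of_real (m\<^sup>2))" "0 \<le> m"
  shows "mabs x = mat (of_real m)"
  unfolding mabs_def
proof (rule the_equality)
  show "psd (mat (of_real m)) \<and> mat (of_real m) ** mat (of_real m) = adj x ** x"
    using assms psd_mat_of_real by (simp add: mat_eq_mat2 mat2_mult power2_eq_square)
qed (use assms psd_sqrt_of_scalar in auto)

lemma mabs_hermitian_traceless:
  assumes "adj x = x" "mtrace x = 0"
  shows "mabs x = mat (of_real (sqrt (- Re (det x))))"
proof -
  obtain p q where x: "x = mat2 (of_real p) q (cnj q) (- of_real p)"
    using assms by (rule hermitian_traceless_mat2)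
  have det: "- Re (det x) = p\<^sup>2 + (cmod q)\<^sup>2"
    by (simp add: x det_mat2 mult_cnj_eq_norm_square power2_eq_square)
  have "adj x ** x = mat (of_real (p\<^sup>2 + (cmod q)\<^sup>2))"
    by (simp add: x adj_mat2 mat2_mult mat_eq_mat2 mat2_eq_iff mult_cnj_eq_norm_square
        power2_eq_square)
  then show ?thesis
    unfolding det by (intro mabs_eq_scalar) simp_all
qed

lemma abs_compatible_iff_det:
  assumes "adj a = a" "mtrace a = 1" "adj b = b" "mtrace b = 1"
  shows "abs_compatible a b \<longleftrightarrow>
    sqrt (- Re (det (a - b))) + sqrt (- Re (det (mat 1 - a - b))) = 1"
proof -
  from assms have "mabs (a - b) = mat (of_real (sqrt (- Re (det (a - b)))))"
    "mabs (mat 1 - a - b) = mat (of_real (sqrt (- Re (det (mat 1 - a - b)))))"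
    by (simp_all add: mabs_hermitian_traceless adj_diff mtrace_diff)
  moreover have "(mat (of_real c) + mat (of_real d) :: M2) = mat 1 \<longleftrightarrow> c + d = 1" for c d :: real
    by (simp add: mat_eq_mat2 mat2_add mat2_eq_iff flip: of_real_add)
  ultimately show ?thesis
    by (simp add: abs_compatible_def)
qed

lemma abs_compatible_unitary_conj:
  assumes "unitary u" "adj a = a" "mtrace a = 1" "adj b = b" "mtrace b = 1"
  shows "abs_compatible (adj u ** a ** u) (adj u ** b ** u) \<longleftrightarrow> abs_compatible a b"
  using assms
  by (simp add: abs_compatible_iff_det adj_congruence mtrace_unitary_conj det_unitary_conj
      flip: congruence_diff unitary_conj_one_diff)

lemma hermitian_traceless_diagonalizable:
  assumes "adj x = x" "mtrace x = 0"
  obtains u where "unitary u" "(adj u ** x ** u) $ 1 $ 2 = 0"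
proof -
  obtain p q where x: "x = mat2 (of_real p) q (cnj q) (- of_real p)"
    using assms by (rule hermitian_traceless_mat2)
  show ?thesis
  proof (cases "q = 0")
    case True
    then show ?thesis
      by (intro that[of "mat 1"]) (simp_all add: unitary_def x)
  next
    case False
    define m where "m = sqrt (p\<^sup>2 + (cmod q)\<^sup>2)"
    define r where "r = m - p"
    define n where "n = sqrt ((cmod q)\<^sup>2 + r\<^sup>2)"
    \<comment> \<open>The first column (q, r) / n of u is a unit eigenvector of x for the eigenvalue m.\<close>
    define u where "u = mat2 (q / of_real n) (- of_real r / of_real n) (of_real r / of_real n) (cnj q / of_real n)"
    have "sqrt (p\<^sup>2) < m"
      unfolding m_def using False by (intro real_sqrt_less_mono) simp
    then have "0 < r"
      unfolding r_def by simp
    then have n: "0 < n" "n\<^sup>2 = (cmod q)\<^sup>2 + r\<^sup>2"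
      unfolding n_def by (simp_all add: add_nonneg_pos)
    have eigen: "(cmod q)\<^sup>2 = 2 * p * r + r\<^sup>2"
      unfolding r_def m_def by (simp add: power2_eq_square algebra_simps)
    have "adj u ** u = mat2 (of_real (n\<^sup>2) / (of_real n)\<^sup>2) 0 0 (of_real (n\<^sup>2) / (of_real n)\<^sup>2)"
      using n by (simp add: u_def adj_mat2 mat2_mult mat2_eq_iff mult_cnj_eq_norm_square
          field_simps power2_eq_square)
    then have "unitary u"
      using n(1) by (simp add: unitary_def mat_eq_mat2)
    moreover have "(adj u ** x ** u) $ 1 $ 2 =
        cnj q / (of_real n)\<^sup>2 * of_real ((cmod q)\<^sup>2 - 2 * p * r - r\<^sup>2)"
      using n by (simp add: u_def x adj_mat2 mat2_mult mult_cnj_eq_norm_square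
          field_simps power2_eq_square)
    ultimately show ?thesis
      using eigen by (intro that) simp_all
  qed
qed

lemma sqrt_eq_iff_eq_square: "0 \<le> y \<Longrightarrow> sqrt x = y \<longleftrightarrow> x = y\<^sup>2"
  using real_sqrt_unique by fastforce

lemma sqrt_add_abs_eq_one_iff:
  fixes t s A :: real
  assumes t: "0 < t" "t < 1" and s: "0 < s" "s < 1" and A: "0 \<le> A" "A < t * (1 - t)"
  shows "sqrt ((t - s)\<^sup>2 + 4 * A) + \<bar>1 - t - s\<bar> = 1 \<longleftrightarrow> s = A / t \<or> s = 1 - A / (1 - t)"
proof (cases "t + s \<le> 1")
  case True
  have "s \<noteq> 1 - A / (1 - t)"
  proof
    assume "s = 1 - A / (1 - t)"
    with t have "A = (1 - t) * (1 - s)"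
      by (simp add: field_simps)
    with A have "(1 - t) * (1 - s) < (1 - t) * t"
      by (simp add: mult.commute)
    with t True show False by simp
  qed
  have "sqrt ((t - s)\<^sup>2 + 4 * A) + \<bar>1 - t - s\<bar> = 1 \<longleftrightarrow> sqrt ((t - s)\<^sup>2 + 4 * A) = t + s"
    using True by auto
  also have "\<dots> \<longleftrightarrow> (t - s)\<^sup>2 + 4 * A = (t + s)\<^sup>2"
    using t s by (simp add: sqrt_eq_iff_eq_square)
  also have "\<dots> \<longleftrightarrow> s = A / t"
    using t by (auto simp: field_simps power2_eq_square)
  finally show ?thesis
    using \<open>s \<noteq> 1 - A / (1 - t)\<close> by blast
next
  case False
  have "s \<noteq> A / t"
  proof
    assume "s = A / t"
    with t A have "t * s < t * (1 - t)"
      by simp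
    with t False show False by simp
  qed
  have "sqrt ((t - s)\<^sup>2 + 4 * A) + \<bar>1 - t - s\<bar> = 1 \<longleftrightarrow> sqrt ((t - s)\<^sup>2 + 4 * A) = 2 - t - s"
    using False by auto
  also have "\<dots> \<longleftrightarrow> (t - s)\<^sup>2 + 4 * A = (2 - t - s)\<^sup>2"
    using t s by (simp add: sqrt_eq_iff_eq_square)
  also have "\<dots> \<longleftrightarrow> s = 1 - A / (1 - t)"
    using t by (auto simp: field_simps power2_eq_square)
  finally show ?thesis
    using \<open>s \<noteq> A / t\<close> by blast
qed

lemma abs_compatible_mat2:
  "abs_compatible (mat2 (of_real t) \<alpha> (cnj \<alpha>) (of_real (1 - t)))
     (mat2 (of_real s) (- \<alpha>) (cnj (- \<alpha>)) (of_real (1 - s)))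
   \<longleftrightarrow> sqrt ((t - s)\<^sup>2 + 4 * (cmod \<alpha>)\<^sup>2) + \<bar>1 - t - s\<bar> = 1"
proof -
  have "det (mat2 (of_real t) \<alpha> (cnj \<alpha>) (of_real (1 - t))
      - mat2 (of_real s) (- \<alpha>) (cnj (- \<alpha>)) (of_real (1 - s))) = - of_real ((t - s)\<^sup>2 + 4 * (cmod \<alpha>)\<^sup>2)"
    by (simp add: mat2_diff det_mat2 mult_cnj_eq_norm_square power2_eq_square algebra_simps)
  moreover have "det (mat 1 - mat2 (of_real t) \<alpha> (cnj \<alpha>) (of_real (1 - t))
      - mat2 (of_real s) (- \<alpha>) (cnj (- \<alpha>)) (of_real (1 - s))) = - of_real ((1 - t - s)\<^sup>2)"
    by (simp add: mat_eq_mat2 mat2_diff det_mat2 power2_eq_square algebra_simps)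
  ultimately show ?thesis
    by (simp add: abs_compatible_iff_det adj_mat2 mtrace_mat2 add.commute)
qed

lemma setS_unitary_conj:
  assumes "c \<in> setS" "unitary u"
  obtains t \<alpha> where "adj u ** c ** u = mat2 (of_real t) \<alpha> (cnj \<alpha>) (of_real (1 - t))"
    "0 < t" "t < 1" "(cmod \<alpha>)\<^sup>2 < t * (1 - t)"
proof -
  have c: "adj c = c" "mtrace c = 1" "0 < Re (det c)"
    using assms(1) by (auto simp: setS_def psd_def)
  with assms(2) have "adj (adj u ** c ** u) = adj u ** c ** u" "mtrace (adj u ** c ** u) = 1"
    by (simp_all add: adj_congruence mtrace_unitary_conj)
  then obtain t \<alpha> where tc: "adj u ** c ** u = mat2 (of_real t) \<alpha> (cnj \<alpha>) (of_real (1 - t))"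
    by (rule hermitian_trace_one_mat2)
  have "det c = of_real (t * (1 - t) - (cmod \<alpha>)\<^sup>2)"
    using det_unitary_conj[OF assms(2), of c] by (simp add: tc det_mat2 mult_cnj_eq_norm_square)
  with c(3) have \<alpha>: "(cmod \<alpha>)\<^sup>2 < t * (1 - t)"
    by simp
  then have "0 < t * (1 - t)"
    by (rule le_less_trans[OF zero_le_power2])
  with tc \<alpha> show ?thesis
    by (intro that) (auto simp: zero_less_mult_iff)
qed

lemma abs_compatible_iff_unitary_normal_form:
  assumes "adj a = a" "mtrace a = 1" "adj b = b" "mtrace b = 1" "unitary u"
    and "adj u ** a ** u = mat2 (of_real t) \<alpha> (cnj \<alpha>) (of_real (1 - t))"
    and "adj u ** b ** u = mat2 (of_real s) (- \<alpha>) (cnj (- \<alpha>)) (of_real (1 - s))"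
    and "0 < t" "t < 1" "0 < s" "s < 1" "(cmod \<alpha>)\<^sup>2 < t * (1 - t)"
  shows "abs_compatible a b \<longleftrightarrow> s = (cmod \<alpha>)\<^sup>2 / t \<or> s = 1 - (cmod \<alpha>)\<^sup>2 / (1 - t)"
  using assms abs_compatible_unitary_conj[of u a b] abs_compatible_mat2[of t \<alpha> s]
    sqrt_add_abs_eq_one_iff[of t s "(cmod \<alpha>)\<^sup>2"]
  by simp

theorem theorem3p5:
  fixes a b :: M2
  assumes "a \<in> setS" and "b \<in> setS"
  shows "abs_compatible a b \<longleftrightarrow>
    (\<exists>u \<alpha> (t::real) (s::real). unitary u
       \<and> adj u ** a ** u = mat2 (of_real t) \<alpha> (cnj \<alpha>) (of_real (1 - t))
       \<and> adj u ** b ** u = mat2 (of_real s) (- \<alpha>) (cnj (- \<alpha>)) (of_real (1 - s))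
       \<and> - \<alpha> \<noteq> 0 \<and> 0 < s \<and> s < 1 \<and> 0 < t \<and> t < 1
       \<and> (cmod \<alpha>)\<^sup>2 < t * (1 - t)
       \<and> (s = (cmod \<alpha>)\<^sup>2 / t \<or> s = 1 - (cmod \<alpha>)\<^sup>2 / (1 - t)))"
proof -
  have a: "adj a = a" "mtrace a = 1" and b: "adj b = b" "mtrace b = 1"
    using assms by (auto simp: setS_def psd_def)
  show ?thesis (is "_ \<longleftrightarrow> ?rhs")
  proof
    assume ac: "abs_compatible a b"
    have "adj (mat 1 - a - b) = mat 1 - a - b" "mtrace (mat 1 - a - b) = 0"
      using a b by (simp_all add: adj_diff mtrace_diff)
    then obtain u where u: "unitary u" and diag: "(adj u ** (mat 1 - a - b) ** u) $ 1 $ 2 = 0"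
      by (rule hermitian_traceless_diagonalizable)
    obtain t \<alpha> where a': "adj u ** a ** u = mat2 (of_real t) \<alpha> (cnj \<alpha>) (of_real (1 - t))"
      and t: "0 < t" "t < 1" "(cmod \<alpha>)\<^sup>2 < t * (1 - t)"
      using assms(1) u by (rule setS_unitary_conj)
    obtain s \<beta> where b': "adj u ** b ** u = mat2 (of_real s) \<beta> (cnj \<beta>) (of_real (1 - s))"
      and s: "0 < s" "s < 1"
      using assms(2) u by (rule setS_unitary_conj)
    have "\<beta> = - \<alpha>"
      using diag unfolding unitary_conj_one_diff[OF u] a' b'
      by (simp add: mat_eq_mat2 mat2_diff eq_neg_iff_add_eq_0)
    with a b u a' b' t s ac have "s = (cmod \<alpha>)\<^sup>2 / t \<or> s = 1 - (cmod \<alpha>)\<^sup>2 / (1 - t)"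
      by (simp add: abs_compatible_iff_unitary_normal_form)
    moreover from this s have "- \<alpha> \<noteq> 0"
      by auto
    ultimately show ?rhs
      using u a' b' t s \<open>\<beta> = - \<alpha>\<close> by blast
  qed (use a b abs_compatible_iff_unitary_normal_form in blast)
qed

end
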